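(* Let $\Sigma$ be a finite connected multigraph (loops allowed) and $\varphi\colon V(\Sigma)\to\mathbb{R}$. Then \[\max_v\varphi(v)-\min_v\varphi(v)\le M(\Delta(\varphi))\cdot\operatorname{diam}(\Sigma).\]
   Context: For $\varphi\colon V(\Sigma)\to\mathbb{R}$, the Laplacian is the divisor (real-valued function on vertices) $\Delta(\varphi)(v)=\sum_{e=vw}(\varphi(v)-\varphi(w))$, the sum over edges $e$ incident to $v$ with other endpoint $w$ (loops contribute $0$). For $f\colon V(\Sigma)\to\mathbb{R}$, $M(f)=\max_{S\subseteq V(\Sigma)}\left|\sum_{v\in S}f(v)\right|$. $\operatorname{diam}(\Sigma)$ is the maximum over pairs of vertices of the number of edges in a shortest path joining them. *)

theory Defs
  imports Complex_Main
begin

text \<open>A finite multigraph (loops and parallel edges allowed) is given by a vertex set V,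
  an edge set E, and an endpoint map ends assigning to each edge its (unordered) pair of
  endpoints, represented as a pair; a loop has ends e = (v, v).\<close>

definition multigraph :: "'v set \<Rightarrow> 'e set \<Rightarrow> ('e \<Rightarrow> 'v \<times> 'v) \<Rightarrow> bool" where
  "multigraph V E ends \<longleftrightarrow> finite V \<and> finite E \<and>
     (\<forall>e\<in>E. fst (ends e) \<in> V \<and> snd (ends e) \<in> V)"

definition incident :: "('e \<Rightarrow> 'v \<times> 'v) \<Rightarrow> 'e \<Rightarrow> 'v \<Rightarrow> bool" where
  "incident ends e v \<longleftrightarrow> fst (ends e) = v \<or> snd (ends e) = v"

definition other_end :: "('e \<Rightarrow> 'v \<times> 'v) \<Rightarrow> 'e \<Rightarrow> 'v \<Rightarrow> 'v" where
  "other_end ends e v = (if fst (ends e) = v then snd (ends e) else fst (ends e))"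

definition laplacian :: "'e set \<Rightarrow> ('e \<Rightarrow> 'v \<times> 'v) \<Rightarrow> ('v \<Rightarrow> real) \<Rightarrow> 'v \<Rightarrow> real" where
  "laplacian E ends \<phi> v = (\<Sum>e\<in>{e\<in>E. incident ends e v}. \<phi> v - \<phi> (other_end ends e v))"

definition adj_rel :: "'e set \<Rightarrow> ('e \<Rightarrow> 'v \<times> 'v) \<Rightarrow> ('v \<times> 'v) set" where
  "adj_rel E ends = {(u, w). \<exists>e\<in>E. ends e = (u, w) \<or> ends e = (w, u)}"

definition connected_mg :: "'v set \<Rightarrow> 'e set \<Rightarrow> ('e \<Rightarrow> 'v \<times> 'v) \<Rightarrow> bool" where
  "connected_mg V E ends \<longleftrightarrow> V \<noteq> {} \<and> (\<forall>u\<in>V. \<forall>w\<in>V. (u, w) \<in> (adj_rel E ends)\<^sup>*)"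

definition gdist :: "'e set \<Rightarrow> ('e \<Rightarrow> 'v \<times> 'v) \<Rightarrow> 'v \<Rightarrow> 'v \<Rightarrow> nat" where
  "gdist E ends u w = (LEAST n. (u, w) \<in> (adj_rel E ends) ^^ n)"

definition diam :: "'v set \<Rightarrow> 'e set \<Rightarrow> ('e \<Rightarrow> 'v \<times> 'v) \<Rightarrow> nat" where
  "diam V E ends = Max {gdist E ends u w | u w. u \<in> V \<and> w \<in> V}"

definition Mnorm :: "'v set \<Rightarrow> ('v \<Rightarrow> real) \<Rightarrow> real" where
  "Mnorm V f = Max {\<bar>\<Sum>v\<in>S. f v\<bar> | S. S \<subseteq> V}"

end

theory Submission
  imports Defs
begin

text \<open>Summing the Laplacian over a set S of vertices, every edge inside S or outside S
  cancels, leaving the flow of \<open>\<phi>\<close> across the cut (S, V - S). For a superlevel set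
  S = {v. \<phi> x \<le> \<phi> v} all cut terms are nonnegative, so one edge from x down to a
  lower neighbour y already gives \<open>\<phi> x - \<phi> y \<le> M(\<Delta> \<phi>)\<close>. Summing this along a
  shortest path from a minimum to a maximum of \<open>\<phi>\<close> gives the bound with the diameter.\<close>

definition cut_flow :: "'v set \<Rightarrow> ('e \<Rightarrow> 'v \<times> 'v) \<Rightarrow> ('v \<Rightarrow> real) \<Rightarrow> 'e \<Rightarrow> real" where
  "cut_flow S ends \<phi> e = (\<Sum>v\<in>{v\<in>S. incident ends e v}. \<phi> v - \<phi> (other_end ends e v))"

lemma sum_laplacian_eq_sum_cut_flow:
  assumes "finite S" and "finite E"
  shows "(\<Sum>v\<in>S. laplacian E ends \<phi> v) = (\<Sum>e\<in>E. cut_flow S ends \<phi> e)"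
  unfolding laplacian_def cut_flow_def using assms by (rule sum.swap_restrict)

lemma cut_flow_Pair:
  assumes "ends e = (x, y)"
  shows "cut_flow S ends \<phi> e =
    (if x \<in> S \<and> y \<notin> S then \<phi> x - \<phi> y else 0) + (if y \<in> S \<and> x \<notin> S then \<phi> y - \<phi> x else 0)"
proof -
  have endpoints: "{v\<in>S. incident ends e v} = ({x} \<inter> S) \<union> ({y} \<inter> S)"
    using assms by (auto simp: incident_def)
  show ?thesis
  proof (cases "x = y")
    case True
    then show ?thesis unfolding cut_flow_def endpoints using assms
      by (auto simp: other_end_def)
  next
    case False
    then show ?thesis unfolding cut_flow_def endpoints using assms
      by (auto simp: other_end_def Int_insert_left sum.union_disjoint)
  qed
qed

lemma cut_flow_superlevel_nonneg:
  assumes "ends e = (x, y)" and "x \<in> V" and "y \<in> V"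
  shows "0 \<le> cut_flow {v\<in>V. c \<le> \<phi> v} ends \<phi> e"
  using assms by (auto simp: cut_flow_Pair)

lemma cut_flow_superlevel_edge:
  assumes "ends e = (x, y) \<or> ends e = (y, x)" and "x \<in> V" and "y \<in> V" and "\<phi> y < \<phi> x"
  shows "cut_flow {v\<in>V. \<phi> x \<le> \<phi> v} ends \<phi> e = \<phi> x - \<phi> y"
  using assms by (auto simp: cut_flow_Pair)

lemma abs_sum_le_Mnorm:
  assumes "finite V" and "S \<subseteq> V"
  shows "\<bar>\<Sum>v\<in>S. f v\<bar> \<le> Mnorm V f"
  unfolding Mnorm_def
proof (rule Max_ge)
  have "{\<bar>\<Sum>v\<in>S. f v\<bar> | S. S \<subseteq> V} = (\<lambda>S. \<bar>\<Sum>v\<in>S. f v\<bar>) ` Pow V" by auto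
  then show "finite {\<bar>\<Sum>v\<in>S. f v\<bar> | S. S \<subseteq> V}" using assms(1) by simp
qed (use assms(2) in blast)

lemma Mnorm_nonneg:
  assumes "finite V"
  shows "0 \<le> Mnorm V f"
  using abs_sum_le_Mnorm[OF assms, of "{}" f] by simp

lemma edge_diff_le_Mnorm_laplacian:
  assumes mg: "multigraph V E ends" and e: "e \<in> E" and ends: "ends e = (x, y) \<or> ends e = (y, x)"
    and lt: "\<phi> y < \<phi> x"
  shows "\<phi> x - \<phi> y \<le> Mnorm V (laplacian E ends \<phi>)"
proof -
  define S where "S = {v\<in>V. \<phi> x \<le> \<phi> v}"
  have fin: "finite V" "finite E" and endpoints_in: "\<forall>e\<in>E. fst (ends e) \<in> V \<and> snd (ends e) \<in> V"
    using mg by (auto simp: multigraph_def)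
  have "x \<in> V" "y \<in> V" using endpoints_in e ends by force+
  have nonneg: "0 \<le> cut_flow S ends \<phi> e'" if "e' \<in> E" for e'
    using endpoints_in that unfolding S_def
    by (intro cut_flow_superlevel_nonneg[where V = V]) (auto intro: prod.collapse[symmetric])
  have "\<phi> x - \<phi> y = cut_flow S ends \<phi> e"
    unfolding S_def using ends \<open>x \<in> V\<close> \<open>y \<in> V\<close> lt by (simp add: cut_flow_superlevel_edge)
  also have "\<dots> \<le> (\<Sum>e\<in>E. cut_flow S ends \<phi> e)"
    by (rule member_le_sum[OF e]) (use nonneg fin(2) in auto)
  also have "\<dots> = (\<Sum>v\<in>S. laplacian E ends \<phi> v)"
    using fin by (simp add: S_def sum_laplacian_eq_sum_cut_flow)
  also have "\<dots> \<le> Mnorm V (laplacian E ends \<phi>)"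
    using abs_sum_le_Mnorm[OF fin(1), of S "laplacian E ends \<phi>"] by (simp add: S_def)
  finally show ?thesis .
qed

lemma adj_diff_le_Mnorm_laplacian:
  assumes mg: "multigraph V E ends" and "(u, w) \<in> adj_rel E ends"
  shows "\<phi> w - \<phi> u \<le> Mnorm V (laplacian E ends \<phi>)"
proof (cases "\<phi> u < \<phi> w")
  case True
  obtain e where "e \<in> E" "ends e = (u, w) \<or> ends e = (w, u)"
    using assms(2) by (auto simp: adj_rel_def)
  with True show ?thesis using edge_diff_le_Mnorm_laplacian[OF mg] by blast
next
  case False
  moreover have "finite V" using mg by (simp add: multigraph_def)
  ultimately show ?thesis using Mnorm_nonneg[of V "laplacian E ends \<phi>"] by linarith
qed

lemma relpow_diff_le_Mnorm_laplacian:
  assumes mg: "multigraph V E ends" and "(a, b) \<in> adj_rel E ends ^^ n"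
  shows "\<phi> b - \<phi> a \<le> real n * Mnorm V (laplacian E ends \<phi>)"
  using assms(2)
proof (induction n arbitrary: b)
  case 0
  then show ?case by simp
next
  case (Suc n)
  then obtain c where "(a, c) \<in> adj_rel E ends ^^ n" and "(c, b) \<in> adj_rel E ends"
    by auto
  with Suc.IH adj_diff_le_Mnorm_laplacian[OF mg, of c b \<phi>] show ?case
    by (fastforce simp: algebra_simps)
qed

lemma relpow_gdist:
  assumes "(u, w) \<in> (adj_rel E ends)\<^sup>*"
  shows "(u, w) \<in> adj_rel E ends ^^ gdist E ends u w"
  using assms unfolding gdist_def by (metis LeastI rtrancl_power)

lemma gdist_le_diam:
  assumes "finite V" and "u \<in> V" and "w \<in> V"
  shows "gdist E ends u w \<le> diam V E ends"
  unfolding diam_def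
proof (rule Max_ge)
  have "{gdist E ends u w | u w. u \<in> V \<and> w \<in> V} = (\<lambda>(u, w). gdist E ends u w) ` (V \<times> V)"
    by auto
  then show "finite {gdist E ends u w | u w. u \<in> V \<and> w \<in> V}" using assms(1) by simp
qed (use assms in blast)

theorem mainTheorem7:
  fixes V :: "'v set" and E :: "'e set" and ends :: "'e \<Rightarrow> 'v \<times> 'v"
    and \<phi> :: "'v \<Rightarrow> real"
  assumes "multigraph V E ends" and "connected_mg V E ends"
  shows "Max (\<phi> ` V) - Min (\<phi> ` V)
           \<le> Mnorm V (laplacian E ends \<phi>) * real (diam V E ends)"
proof -
  let ?M = "Mnorm V (laplacian E ends \<phi>)"
  have fin: "finite V" using assms(1) by (simp add: multigraph_def)
  have ne: "V \<noteq> {}" and conn: "\<forall>u\<in>V. \<forall>w\<in>V. (u, w) \<in> (adj_rel E ends)\<^sup>*"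
    using assms(2) by (auto simp: connected_mg_def)
  obtain b where b: "b \<in> V" "\<phi> b = Max (\<phi> ` V)"
    using Max_in[of "\<phi> ` V"] fin ne by fastforce
  obtain a where a: "a \<in> V" "\<phi> a = Min (\<phi> ` V)"
    using Min_in[of "\<phi> ` V"] fin ne by fastforce
  have "\<phi> b - \<phi> a \<le> real (gdist E ends a b) * ?M"
    using relpow_diff_le_Mnorm_laplacian[OF assms(1) relpow_gdist] conn a b by blast
  also have "\<dots> \<le> real (diam V E ends) * ?M"
    using gdist_le_diam[OF fin a(1) b(1), of E ends] Mnorm_nonneg[OF fin, of "laplacian E ends \<phi>"]
    by (simp add: mult_right_mono)
  finally show ?thesis using a b by (simp add: mult.commute)
qed

end
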